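(* Let $C_n=\frac{1}{n+1}\binom{2n}{n}$ ($n\ge0$) be the Catalan numbers. Then for every $n\ge0$, $$C_{n+1}=\sum_{h=0}^n\binom{n}{h}(-1)^h4^{n-h}C_{h+1};$$ that is, $L^{(-1,4)}(\sigma(C))=\sigma(C)$.
   Context: $\sigma$ is the shift operator: $\sigma((a_0,a_1,a_2,\ldots))=(a_1,a_2,\ldots)$. For $h,y$, $L^{(h,y)}(a)$ is the sequence with $n$-th term $\sum_{i=0}^n\binom{n}{i}h^iy^{n-i}a_i$. *)

theory Defs
  imports Complex_Main
begin

definition catalan :: "nat \<Rightarrow> real" where
  "catalan n = real (2 * n choose n) / real (n + 1)"

definition shift :: "(nat \<Rightarrow> 'a) \<Rightarrow> nat \<Rightarrow> 'a" where
  "shift a = (\<lambda>n. a (Suc n))"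

definition binom_transform :: "'a::comm_ring_1 \<Rightarrow> 'a \<Rightarrow> (nat \<Rightarrow> 'a) \<Rightarrow> nat \<Rightarrow> 'a" where
  "binom_transform h y a = (\<lambda>n. \<Sum>i=0..n. of_nat (n choose i) * h ^ i * y ^ (n - i) * a i)"

end

theory Submission
  imports Defs
begin

text \<open>
  With \<open>u h = (-1/4)^h C\<^sub>h\<^sub>+\<^sub>1\<close> the claim reads
  \<open>4^n \<Sum>\<^sub>h (n choose h) u h = C\<^sub>n\<^sub>+\<^sub>1\<close>. The Catalan recurrence
  \<open>(n+2) C\<^sub>n\<^sub>+\<^sub>1 = 2(2n+1) C\<^sub>n\<close> makes \<open>u\<close> hypergeometric, and creative
  telescoping (Zeilberger's algorithm) shows that \<open>T n = \<Sum>\<^sub>h (n choose h) u h\<close>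
  satisfies \<open>4(n+3) T (n+1) = 2(2n+3) T n\<close>, which is exactly the recurrence of
  \<open>C\<^sub>n\<^sub>+\<^sub>1 / 4^n\<close>. Both sequences start at 1.
\<close>

lemma binomial_Suc_double: "(2 * Suc m choose Suc m) = 2 * (2 * m + 1 choose m)"
proof -
  have "(2 * Suc m choose Suc m) * Suc m = Suc (2 * m + 1) * (2 * m + 1 choose m)"
    using Suc_times_binomial_eq[of "2 * m + 1" m] by simp
  also have "\<dots> = 2 * (2 * m + 1 choose m) * Suc m" by simp
  finally show ?thesis by (simp only: mult_right_cancel)
qed

lemma central_binomial_Suc: "Suc m * (2 * Suc m choose Suc m) = 2 * (2 * m + 1) * (2 * m choose m)"
proof -
  have "(2 * m + 1 choose m) = (Suc (2 * m) choose Suc m)"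
    using binomial_symmetric[of m "2 * m + 1"] by simp
  then have "Suc m * (2 * Suc m choose Suc m) = 2 * (Suc m * (Suc (2 * m) choose Suc m))"
    by (simp only: binomial_Suc_double mult.left_commute)
  also have "\<dots> = 2 * (Suc (2 * m) * (2 * m choose m))"
    by (simp only: Suc_times_binomial)
  finally show ?thesis by simp
qed

lemma catalan_Suc: "real (n + 2) * catalan (Suc n) = 2 * (2 * real n + 1) * catalan n"
proof -
  define X where "X = real (2 * Suc n choose Suc n)"
  define B where "B = real (2 * n choose n)"
  have central: "real (Suc n) * X = 2 * (2 * real n + 1) * B"
    unfolding X_def B_def using arg_cong[OF central_binomial_Suc[of n], of real]
    by (simp add: algebra_simps del: binomial_Suc_Suc)
  have "real (n + 2) * catalan (Suc n) = X"
    by (simp add: catalan_def X_def)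
  also have "\<dots> = 2 * (2 * real n + 1) * B / real (Suc n)"
    using central by (simp add: field_simps)
  also have "\<dots> = 2 * (2 * real n + 1) * catalan n"
    by (simp add: catalan_def B_def)
  finally show ?thesis .
qed

lemma Suc_times_binomial_Suc_real:
  "real (Suc k) * real (n choose Suc k) = (real n - real k) * real (n choose k)"
proof (cases "k \<le> n")
  case True
  have "Suc k * (n choose Suc k) = (n - k) * (n choose k)"
    using binomial_absorption[of k n] binomial_absorb_comp[of n k] by (simp only:)
  then have "real (Suc k * (n choose Suc k)) = real ((n - k) * (n choose k))"
    by (rule arg_cong)
  with True show ?thesis by (simp add: algebra_simps)
next
  case False
  then show ?thesis by (simp add: binomial_eq_0)
qed

lemma binomial_sum_Suc:
  fixes u :: "nat \<Rightarrow> real"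
  assumes u_Suc: "\<And>h. 2 * real (h + 3) * u (Suc h) = - ((2 * real h + 3) * u h)"
  shows "4 * real (n + 3) * (\<Sum>h\<le>Suc n. real (Suc n choose h) * u h)
       = 2 * (2 * real n + 3) * (\<Sum>h\<le>n. real (n choose h) * u h)"
proof -
  define F where "F h = 4 * real (n + 3) * real (Suc n choose h) * u h
                     - 2 * (2 * real n + 3) * real (n choose h) * u h" for h
  \<comment> \<open>Zeilberger certificate: each summand of the recurrence telescopes against \<open>H\<close>.\<close>
  define H where "H k = 4 * real (k + 3) * real (n choose k) * u (Suc k)" for k
  have F_0: "F 0 = - H 0"
    using u_Suc[of 0] by (simp add: F_def H_def algebra_simps)
  have F_Suc: "F (Suc k) = H k - H (Suc k)" for k
  proof -
    have "H (Suc k) = 2 * real (n choose Suc k) * (2 * real (Suc k + 3) * u (Suc (Suc k)))"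
      by (simp add: H_def algebra_simps)
    also have "\<dots> = - 2 * (2 * real k + 5) * real (n choose Suc k) * u (Suc k)"
      by (simp only: u_Suc) (simp add: algebra_simps)
    finally have H_Suc: "H (Suc k) = - 2 * (2 * real k + 5) * real (n choose Suc k) * u (Suc k)" .
    have "F (Suc k) - (H k - H (Suc k))
        = 4 * u (Suc k) * ((real n - real k) * real (n choose k) - real (Suc k) * real (n choose Suc k))"
      unfolding F_def H_Suc by (simp add: H_def algebra_simps)
    also have "\<dots> = 0"
      by (simp only: Suc_times_binomial_Suc_real diff_self mult_zero_right)
    finally show ?thesis by simp
  qed
  have "(\<Sum>h\<le>Suc n. F h) = F 0 + (\<Sum>k\<le>n. H k - H (Suc k))"
    by (simp only: sum.atMost_Suc_shift F_Suc)
  also have "\<dots> = 0"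
    unfolding sum_telescope F_0 by (simp add: H_def)
  finally have "(\<Sum>h\<le>Suc n. F h) = 0" .
  moreover have "(\<Sum>h\<le>Suc n. F h)
      = 4 * real (n + 3) * (\<Sum>h\<le>Suc n. real (Suc n choose h) * u h)
        - 2 * (2 * real n + 3) * (\<Sum>h\<le>Suc n. real (n choose h) * u h)"
    by (simp only: F_def sum_subtractf sum_distrib_left mult.assoc)
  moreover have "(\<Sum>h\<le>Suc n. real (n choose h) * u h) = (\<Sum>h\<le>n. real (n choose h) * u h)"
    by simp
  ultimately show ?thesis by simp
qed

lemma catalan_Suc_binomial_sum:
  "4 ^ n * (\<Sum>h\<le>n. real (n choose h) * ((- 1 / 4) ^ h * catalan (Suc h))) = catalan (Suc n)"
proof (induction n)
  case 0
  then show ?case by simp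
next
  case (Suc n)
  define u :: "nat \<Rightarrow> real" where "u h = (- 1 / 4) ^ h * catalan (Suc h)" for h
  define S where "S m = (\<Sum>h\<le>m. real (m choose h) * u h)" for m
  have u_Suc: "2 * real (h + 3) * u (Suc h) = - ((2 * real h + 3) * u h)" for h
  proof -
    have "2 * real (h + 3) * u (Suc h) = - ((- 1 / 4) ^ h / 2 * (real (Suc h + 2) * catalan (Suc (Suc h))))"
      by (simp add: u_def algebra_simps)
    also have "\<dots> = - ((2 * real h + 3) * u h)"
      by (simp only: catalan_Suc) (simp add: u_def algebra_simps)
    finally show ?thesis .
  qed
  have "real (n + 3) * (4 ^ Suc n * S (Suc n)) = 4 ^ n * (4 * real (n + 3) * S (Suc n))"
    by (simp add: algebra_simps)
  also have "\<dots> = 2 * (2 * real n + 3) * (4 ^ n * S n)"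
    using binomial_sum_Suc[OF u_Suc, of n] by (simp add: S_def algebra_simps)
  also have "\<dots> = 2 * (2 * real n + 3) * catalan (Suc n)"
    using Suc.IH by (simp add: S_def u_def)
  also have "\<dots> = real (n + 3) * catalan (Suc (Suc n))"
    using catalan_Suc[of "Suc n"] by (simp add: algebra_simps)
  finally have "4 ^ Suc n * S (Suc n) = catalan (Suc (Suc n))"
    by (subst (asm) mult_left_cancel) simp_all
  then show ?case by (simp only: S_def u_def)
qed

theorem theorem17:
  shows "binom_transform (-1) 4 (shift catalan) = shift catalan"
proof
  fix n
  have summand: "of_nat (n choose h) * (- 1) ^ h * 4 ^ (n - h) * catalan (Suc h)
      = 4 ^ n * (real (n choose h) * ((- 1 / 4) ^ h * catalan (Suc h)))" if "h \<le> n" for h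
  proof -
    from that have "(4::real) ^ n = 4 ^ (n - h) * 4 ^ h"
      by (simp flip: power_add)
    moreover have "(- 1 :: real) ^ h = 4 ^ h * (- 1 / 4) ^ h"
      by (simp flip: power_mult_distrib)
    ultimately show ?thesis by simp
  qed
  have "binom_transform (-1) 4 (shift catalan) n
      = 4 ^ n * (\<Sum>h\<le>n. real (n choose h) * ((- 1 / 4) ^ h * catalan (Suc h)))"
    by (simp add: binom_transform_def shift_def summand sum_distrib_left atLeast0AtMost)
  also have "\<dots> = shift catalan n"
    by (simp only: catalan_Suc_binomial_sum shift_def)
  finally show "binom_transform (-1) 4 (shift catalan) n = shift catalan n" .
qed

end
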